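(* Let $(M,g,J_{TM})$ be a para-Hermitian manifold and let $(E,J)$ be an exact para-Hermitian algebroid over $M$ with anchor $\rho$ and eigenbundles $E_\pm$. If $E$ admits a para-complex connection $A:TM\to E$, then $$E_+=a_-^*(T^{(0,1)}M)\oplus A_+(T^+M),\qquad E_-=a_+^*(T^{(1,0)}M)\oplus A_-(T^-M).$$
   Context: A Courant algebroid $(E,\rho,\langle\cdot,\cdot\rangle,[\cdot,\cdot])$ over $M$ is a vector bundle with a non-degenerate symmetric pairing, a skew-symmetric bracket and an anchor $\rho:E\to TM$ satisfying the usual axioms; $\rho^*:T^*M\to E$ is given by $\langle\rho^*\xi,e\rangle=\xi(\rho e)$, and $E$ is exact if $0\to T^*M\xrightarrow{\rho^*}E\xrightarrow{\rho}TM\to0$ is exact. A para-Hermitian algebroid is a Courant algebroid with $J\in\Gamma(\mathrm{End}E)$, $J^2=\mathrm{Id}$, equal-rank eigenbundles $E_\pm$ (for $\pm1$), $\langle J\cdot,J\cdot\rangle=-\langle\cdot,\cdot\rangle$, and $\Gamma(E_\pm)$ both closed under the bracket. A para-Hermitian manifold $(M,g,J_{TM})$ has split-signature $g$, $J_{TM}^2=\mathrm{Id}$ with equal-rank integrable eigenbundles $T^\pm M$, and $g(J_{TM}\cdot,J_{TM}\cdot)=-g$. $T^{(1,0)}M\subset T^*M$ is the annihilator of $T^-M$ and $T^{(0,1)}M$ the annihilator of $T^+M$. Let $\pi_{E_\pm}$ be the projections for $E=E_+\oplus E_-$, $a_\pm=\rho|_{E_\pm}:E_\pm\to TM$, and $a_\pm^*:T^*M\to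 E$ be defined by $\langle a_\pm^*\xi,e\rangle=\xi(\rho(\pi_{E_\pm}e))$ for all $e\in E$ (so $a_\pm^*$ takes values in $E_\mp$). A connection is a bundle map $A:TM\to E$ with $\rho\circ A=\mathrm{Id}$ and isotropic image; it is para-complex if $J\circ A=A\circ J_{TM}$; $A_\pm$ denotes the restriction of $A$ to $T^\pm M$. *)

theory Defs
  imports "HOL-Analysis.Analysis"
begin

text \<open>Pointwise (fibrewise) model at a point x of M: 'v is the tangent space T_xM,
  'e is the fibre E_x, covectors are linear maps 'v => real.\<close>

definition covectors :: "('v::real_vector \<Rightarrow> real) set" where
  "covectors = {\<xi>. linear \<xi>}"

definition annihilator :: "'v::real_vector set \<Rightarrow> ('v \<Rightarrow> real) set" where
  "annihilator S = {\<xi>. linear \<xi> \<and> (\<forall>v\<in>S. \<xi> v = 0)}"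

definition eigenspace_pm :: "('a::real_vector \<Rightarrow> 'a) \<Rightarrow> real \<Rightarrow> 'a set" where
  "eigenspace_pm J c = {v. J v = c *\<^sub>R v}"

definition proj_plus :: "('a::real_vector \<Rightarrow> 'a) \<Rightarrow> 'a \<Rightarrow> 'a" where
  "proj_plus J e = (1/2) *\<^sub>R (e + J e)"

definition proj_minus :: "('a::real_vector \<Rightarrow> 'a) \<Rightarrow> 'a \<Rightarrow> 'a" where
  "proj_minus J e = (1/2) *\<^sub>R (e - J e)"

definition rho_star :: "('e \<Rightarrow> 'e \<Rightarrow> real) \<Rightarrow> ('e \<Rightarrow> 'v) \<Rightarrow> ('v \<Rightarrow> real) \<Rightarrow> 'e" where
  "rho_star pair rho \<xi> = (THE e. \<forall>e'. pair e e' = \<xi> (rho e'))"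

text \<open>a_pm^*: < a^* xi, e > = xi (rho (pi_pm e)); P is the projection pi_pm.\<close>
definition a_star :: "('e \<Rightarrow> 'e \<Rightarrow> real) \<Rightarrow> ('e \<Rightarrow> 'v) \<Rightarrow> ('e \<Rightarrow> 'e) \<Rightarrow> ('v \<Rightarrow> real) \<Rightarrow> 'e" where
  "a_star pair rho P \<xi> = (THE e. \<forall>e'. pair e e' = \<xi> (rho (P e')))"

definition internal_direct_sum :: "'a::real_vector set \<Rightarrow> 'a set \<Rightarrow> 'a set \<Rightarrow> bool" where
  "internal_direct_sum W S T \<longleftrightarrow> S \<inter> T = {0} \<and> W = {s + t | s t. s \<in> S \<and> t \<in> T}"

definition nondegenerate :: "('a::zero \<Rightarrow> 'a \<Rightarrow> real) \<Rightarrow> bool" where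
  "nondegenerate B \<longleftrightarrow> (\<forall>x. (\<forall>y. B x y = 0) \<longrightarrow> x = 0)"

definition symmetric_form :: "('a \<Rightarrow> 'a \<Rightarrow> real) \<Rightarrow> bool" where
  "symmetric_form B \<longleftrightarrow> (\<forall>x y. B x y = B y x)"

definition split_signature :: "('a::euclidean_space \<Rightarrow> 'a \<Rightarrow> real) \<Rightarrow> bool" where
  "split_signature B \<longleftrightarrow> even DIM('a) \<and>
     (\<exists>P N. subspace P \<and> subspace N \<and> dim P = DIM('a) div 2 \<and> dim N = DIM('a) div 2 \<and>
        (\<forall>x\<in>P. x \<noteq> 0 \<longrightarrow> B x x > 0) \<and> (\<forall>x\<in>N. x \<noteq> 0 \<longrightarrow> B x x < 0))"

end

theory Submission
  imports Defs
begin

text \<open>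
  Fibrewise, \<open>A\<close> is an isotropic splitting of the anchor intertwining \<open>J\<^sub>T\<^sub>M\<close> and \<open>J\<close>, and
  \<open>E\<^sub>\<plusminus>\<close> are isotropic. Given \<open>x \<in> E\<^sub>+\<close>, split \<open>\<rho> x = v\<^sub>+ + v\<^sub>-\<close>; then \<open>y = x - A v\<^sub>+ \<in> E\<^sub>+\<close>
  has \<open>\<rho> y = v\<^sub>-\<close>, and \<open>y = a\<^sub>-\<^sup>* \<xi>\<close> for \<open>\<xi> = \<langle>y, A _\<rangle>\<close>, which annihilates \<open>T\<^sup>+M\<close> since \<open>E\<^sub>+\<close> is
  isotropic. Indeed \<open>y\<close> pairs trivially with \<open>E\<^sub>+\<close>, and for \<open>f \<in> E\<^sub>-\<close> the element
  \<open>f - A (\<rho> f) \<in> ker \<rho> = \<rho>\<^sup>*(T\<^sup>*M)\<close> pairs with \<open>y\<close> as it does with \<open>A v\<^sub>-\<close>, which is zero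
  because \<open>E\<^sub>-\<close> and \<open>A(TM)\<close> are isotropic. Conversely, if \<open>a\<^sub>-\<^sup>* \<xi> = A v\<close> with \<open>\<xi>\<close> annihilating \<open>T\<^sup>+M\<close>, pairing with
  \<open>A(T\<^sup>-M)\<close> shows that \<open>\<xi>\<close> also vanishes on \<open>T\<^sup>-M\<close>, so the sum is direct. The statement for
  \<open>E\<^sub>-\<close> is the one for \<open>E\<^sub>+\<close> with \<open>J, J\<^sub>T\<^sub>M\<close> replaced by \<open>-J, -J\<^sub>T\<^sub>M\<close>.
\<close>

lemma nondegenerate_bilinear_inj:
  fixes B :: "'a::real_vector \<Rightarrow> 'a \<Rightarrow> real"
  assumes "bilinear B" "nondegenerate B"
  shows "inj B"
proof (rule injI)
  fix x y assume "B x = B y"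
  then have "\<forall>z. B (x - y) z = 0"
    by (simp add: bilinear_lsub[OF assms(1)])
  then show "x = y"
    using assms(2) unfolding nondegenerate_def by (metis right_minus_eq)
qed

lemma nondegenerate_bilinear_represents:
  fixes B :: "'a::euclidean_space \<Rightarrow> 'a \<Rightarrow> real"
  assumes B: "bilinear B" "nondegenerate B" and f: "linear f"
  shows "\<exists>e. B e = f"
proof -
  define \<Phi> where "\<Phi> e = (\<Sum>b\<in>Basis. B e b *\<^sub>R b)" for e
  have inner_\<Phi>: "\<Phi> e \<bullet> x = B e x" for e x
  proof -
    have "B e x = B e (\<Sum>b\<in>Basis. (x \<bullet> b) *\<^sub>R b)"
      by (simp add: euclidean_representation)
    also have "\<dots> = (\<Sum>b\<in>Basis. (x \<bullet> b) * B e b)"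
      using B(1) by (simp add: bilinear_def linear_sum linear_scale)
    finally show ?thesis
      by (simp add: \<Phi>_def inner_sum_left inner_commute[of x] mult.commute[of _ "B e _"])
  qed
  have "linear \<Phi>"
    unfolding \<Phi>_def using B(1)
    by (intro linear_compose_sum ballI) (simp add: linear_iff bilinear_ladd bilinear_lmul scaleR_add_left)
  moreover have "inj \<Phi>"
  proof (rule injI)
    fix x y assume "\<Phi> x = \<Phi> y"
    then have "B x = B y"
      by (metis inner_\<Phi> ext)
    then show "x = y"
      using nondegenerate_bilinear_inj[OF B] by (simp add: inj_eq)
  qed
  \<comment> \<open>\<open>\<Phi> e\<close> is the inner-product representative of \<open>B e\<close>, and \<open>adjoint f 1\<close> that of \<open>f\<close>.\<close>
  ultimately obtain e where "\<Phi> e = adjoint f 1"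
    by (metis linear_injective_imp_surjective surjD)
  then have "B e x = f x" for x
    using adjoint_works[OF f, of x 1] inner_\<Phi>[of e x] by (simp add: inner_commute)
  then show ?thesis by blast
qed

lemma a_star_eqI:
  assumes "inj B" and "B y = (\<lambda>e. \<xi> (rho (P e)))"
  shows "a_star B rho P \<xi> = y"
  unfolding a_star_def
proof (rule the_equality)
  show "\<forall>e. B y e = \<xi> (rho (P e))"
    using assms(2) by (simp add: fun_eq_iff)
next
  fix z assume "\<forall>e. B z e = \<xi> (rho (P e))"
  then have "B z = B y"
    using assms(2) by (simp add: fun_eq_iff)
  then show "z = y"
    using assms(1) by (simp add: inj_eq)
qed

lemma a_star_represents:
  fixes B :: "'a::euclidean_space \<Rightarrow> 'a \<Rightarrow> real"
  assumes B: "bilinear B" "nondegenerate B"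
    and "linear \<xi>" "linear rho" "linear P"
  shows "B (a_star B rho P \<xi>) = (\<lambda>e. \<xi> (rho (P e)))"
proof -
  have "linear (\<lambda>e. \<xi> (rho (P e)))"
    using assms(3-5) linear_compose[of P rho] linear_compose[of "rho \<circ> P" \<xi>] by (simp add: o_def)
  then obtain y where y: "B y = (\<lambda>e. \<xi> (rho (P e)))"
    using nondegenerate_bilinear_represents[OF B] by blast
  moreover have "a_star B rho P \<xi> = y"
    by (rule a_star_eqI[OF nondegenerate_bilinear_inj[OF B]]) (fact y)
  ultimately show ?thesis
    by simp
qed

lemma rho_star_eq_a_star_id: "rho_star B rho = a_star B rho id"
  by (simp add: rho_star_def a_star_def fun_eq_iff)

lemma proj_plus_add_proj_minus: "proj_plus J x + proj_minus J x = x"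
  by (simp add: proj_plus_def proj_minus_def scaleR_add_right scaleR_diff_right flip: scaleR_add_left)

lemma proj_plus_eigenspace:
  assumes "linear J" "\<And>x. J (J x) = x"
  shows "proj_plus J x \<in> eigenspace_pm J 1"
  using assms by (simp add: proj_plus_def eigenspace_pm_def linear_add linear_scale algebra_simps)

lemma proj_minus_eigenspace:
  assumes "linear J" "\<And>x. J (J x) = x"
  shows "proj_minus J x \<in> eigenspace_pm J (-1)"
  using assms by (simp add: proj_minus_def eigenspace_pm_def linear_diff linear_scale algebra_simps)

lemma proj_minus_eigenspace_minus:
  assumes "x \<in> eigenspace_pm J (-1)"
  shows "proj_minus J x = x"
  using assms by (simp add: proj_minus_def eigenspace_pm_def flip: scaleR_2)

lemma proj_minus_involution:
  assumes "\<And>x. J (J x) = x"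
  shows "proj_minus J (J x) = - proj_minus J x"
  using assms by (simp add: proj_minus_def algebra_simps)

lemma linear_proj_minus:
  assumes "linear J"
  shows "linear (proj_minus J)"
  unfolding proj_minus_def
  by (intro linear_compose_scale_right linear_compose_sub linear_ident assms)

lemma linear_eq_0_on_eigenspaces:
  assumes "linear \<xi>" "linear J" "\<And>x. J (J x) = x"
    and "\<And>v. v \<in> eigenspace_pm J 1 \<Longrightarrow> \<xi> v = 0"
    and "\<And>v. v \<in> eigenspace_pm J (-1) \<Longrightarrow> \<xi> v = 0"
  shows "\<xi> v = 0"
proof -
  have "\<xi> v = \<xi> (proj_plus J v) + \<xi> (proj_minus J v)"
    using linear_add[OF assms(1)] by (metis proj_plus_add_proj_minus)
  then show ?thesis
    using assms(4,5) proj_plus_eigenspace[OF assms(2,3)] proj_minus_eigenspace[OF assms(2,3)]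
    by simp
qed

lemma eigenspace_pm_uminus: "eigenspace_pm (\<lambda>x. - J x) c = eigenspace_pm J (- c)"
  unfolding eigenspace_pm_def by (metis minus_minus scaleR_minus_left)

lemma proj_minus_uminus: "proj_minus (\<lambda>x. - J x) = proj_plus J"
  by (simp add: proj_minus_def proj_plus_def fun_eq_iff)

locale para_complex_connection =
  fixes pair :: "'e::euclidean_space \<Rightarrow> 'e \<Rightarrow> real"
    and rho :: "'e \<Rightarrow> 'v::real_vector"
    and J :: "'e \<Rightarrow> 'e"
    and JT :: "'v \<Rightarrow> 'v"
    and A :: "'v \<Rightarrow> 'e"
  assumes pair_bilinear: "bilinear pair"
    and pair_symmetric: "symmetric_form pair"
    and pair_nondegenerate: "nondegenerate pair"
    and rho_linear: "linear rho"
    and ker_rho: "{e. rho e = 0} \<subseteq> rho_star pair rho ` covectors"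
    and J_linear: "linear J"
    and J_involution: "\<And>e. J (J e) = e"
    and pair_J: "\<And>a b. pair (J a) (J b) = - pair a b"
    and JT_linear: "linear JT"
    and JT_involution: "\<And>v. JT (JT v) = v"
    and A_linear: "linear A"
    and rho_A: "\<And>v. rho (A v) = v"
    and A_isotropic: "\<And>u w. pair (A u) (A w) = 0"
    and J_A: "\<And>v. J (A v) = A (JT v)"
begin

lemma pair_commute: "pair a b = pair b a"
  using pair_symmetric by (simp add: symmetric_form_def)

lemma eigenspace_isotropic:
  assumes "x \<in> eigenspace_pm J c" "y \<in> eigenspace_pm J c" "\<bar>c\<bar> = 1"
  shows "pair x y = 0"
proof -
  have "c * c = 1"
    using assms(3) by (metis abs_mult_self_eq mult_1_right)
  then have "pair (J x) (J y) = pair x y"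
    using assms(1,2) by (simp add: eigenspace_pm_def bilinear_lmul[OF pair_bilinear] bilinear_rmul[OF pair_bilinear])
  then show ?thesis
    using pair_J[of x y] by simp
qed

lemma A_eigenspace:
  assumes "v \<in> eigenspace_pm JT c"
  shows "A v \<in> eigenspace_pm J c"
  using assms by (simp add: eigenspace_pm_def J_A linear_scale[OF A_linear])

lemma pair_ker_rho:
  assumes "rho k = 0" "rho z = rho z'"
  shows "pair k z = pair k z'"
proof -
  obtain \<eta> where "linear \<eta>" "k = a_star pair rho id \<eta>"
    using assms(1) ker_rho by (auto simp: covectors_def rho_star_eq_a_star_id)
  then have "pair k = (\<lambda>e. \<eta> (rho e))"
    using a_star_represents[OF pair_bilinear pair_nondegenerate _ rho_linear linear_id] by simp
  then show ?thesis
    using assms(2) by simp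
qed

lemma pair_a_star_minus:
  assumes "linear \<xi>"
  shows "pair (a_star pair rho (proj_minus J) \<xi>) = (\<lambda>e. \<xi> (rho (proj_minus J e)))"
  by (rule a_star_represents[OF pair_bilinear pair_nondegenerate assms rho_linear linear_proj_minus[OF J_linear]])

lemma pair_inj: "inj pair"
  by (rule nondegenerate_bilinear_inj[OF pair_bilinear pair_nondegenerate])

lemma a_star_zero: "a_star pair rho P (\<lambda>_. 0) = 0"
  by (rule a_star_eqI[OF pair_inj]) (simp add: fun_eq_iff bilinear_lzero[OF pair_bilinear])

lemma a_star_minus_eigenspace:
  assumes "linear \<xi>"
  shows "a_star pair rho (proj_minus J) \<xi> \<in> eigenspace_pm J 1"
proof -
  let ?x = "a_star pair rho (proj_minus J) \<xi>"
  have "pair (J ?x) e = pair ?x e" for e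
  proof -
    have "pair (J ?x) e = - pair ?x (J e)"
      using pair_J[of ?x "J e"] by (simp add: J_involution)
    also have "\<dots> = pair ?x e"
      by (simp add: pair_a_star_minus[OF assms] proj_minus_involution[OF J_involution]
          linear_neg[OF rho_linear] linear_neg[OF assms])
    finally show ?thesis .
  qed
  then have "J ?x = ?x"
    using pair_inj by (metis ext injD)
  then show ?thesis
    by (simp add: eigenspace_pm_def)
qed

lemma a_star_minus_pair_A:
  assumes y: "y \<in> eigenspace_pm J 1" and rho_y: "rho y \<in> eigenspace_pm JT (-1)"
  shows "a_star pair rho (proj_minus J) (\<lambda>v. pair y (A v)) = y"
proof (rule a_star_eqI[OF pair_inj], rule ext)
  fix e
  define f where "f = proj_minus J e"
  have f: "f \<in> eigenspace_pm J (-1)"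
    unfolding f_def by (rule proj_minus_eigenspace[OF J_linear J_involution])
  have "pair y (proj_plus J e) = 0"
    using y proj_plus_eigenspace[OF J_linear J_involution] by (rule eigenspace_isotropic) simp
  then have "pair y e = pair y f"
    using bilinear_radd[OF pair_bilinear, of y "proj_plus J e" f]
    by (simp add: f_def proj_plus_add_proj_minus)
  also have "\<dots> = pair y (A (rho f))"
  proof -
    have "rho (f - A (rho f)) = 0"
      by (simp add: linear_diff[OF rho_linear] rho_A)
    then have "pair y (f - A (rho f)) = pair (f - A (rho f)) (A (rho y))"
      unfolding pair_commute[of y] by (rule pair_ker_rho) (simp add: rho_A)
    also have "\<dots> = pair f (A (rho y)) - pair (A (rho f)) (A (rho y))"
      by (rule bilinear_lsub[OF pair_bilinear])
    also have "\<dots> = 0"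
      using eigenspace_isotropic[OF f A_eigenspace[OF rho_y]] by (simp add: A_isotropic)
    finally show ?thesis
      by (simp add: bilinear_rsub[OF pair_bilinear])
  qed
  finally show "pair y e = pair y (A (rho (proj_minus J e)))"
    by (simp add: f_def)
qed

lemma a_star_minus_inter_A:
  "a_star pair rho (proj_minus J) ` annihilator (eigenspace_pm JT 1) \<inter> A ` eigenspace_pm JT 1 = {0}"
proof -
  have "x = 0"
    if x: "x = a_star pair rho (proj_minus J) \<xi>" "x = A v"
      and \<xi>: "\<xi> \<in> annihilator (eigenspace_pm JT 1)" and v: "v \<in> eigenspace_pm JT 1" for x \<xi> v
  proof -
    have \<xi>_minus: "\<xi> w = 0" if w: "w \<in> eigenspace_pm JT (-1)" for w
    proof -
      have "\<xi> w = pair x (A w)"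
        using \<xi> x(1) proj_minus_eigenspace_minus[OF A_eigenspace[OF w]]
        by (simp add: annihilator_def pair_a_star_minus rho_A)
      also have "\<dots> = 0"
        by (simp add: x(2) A_isotropic)
      finally show ?thesis .
    qed
    have "\<xi> = (\<lambda>_. 0)"
      by (rule ext, rule linear_eq_0_on_eigenspaces[OF _ JT_linear JT_involution])
        (use \<xi> \<xi>_minus in \<open>auto simp: annihilator_def\<close>)
    then show "x = 0"
      by (simp add: x(1) a_star_zero)
  qed
  moreover have "0 \<in> a_star pair rho (proj_minus J) ` annihilator (eigenspace_pm JT 1)"
    using a_star_zero[of "proj_minus J"] by (force simp: annihilator_def linear_zero)
  moreover have "0 \<in> A ` eigenspace_pm JT 1"
    using linear_0[OF A_linear] linear_0[OF JT_linear] by (force simp: eigenspace_pm_def)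
  ultimately show ?thesis
    by blast
qed

lemma eigenspace_plus_eq_sum:
  "eigenspace_pm J 1 = {s + t | s t. s \<in> a_star pair rho (proj_minus J) ` annihilator (eigenspace_pm JT 1)
     \<and> t \<in> A ` eigenspace_pm JT 1}"
proof (intro equalityI subsetI)
  fix x assume x: "x \<in> eigenspace_pm J 1"
  define v where "v = proj_plus JT (rho x)"
  define y where "y = x - A v"
  have v: "v \<in> eigenspace_pm JT 1"
    unfolding v_def by (rule proj_plus_eigenspace[OF JT_linear JT_involution])
  have y: "y \<in> eigenspace_pm J 1"
    using x A_eigenspace[OF v] by (simp add: y_def eigenspace_pm_def linear_diff[OF J_linear])
  have "rho y = proj_minus JT (rho x)"
    using proj_plus_add_proj_minus[of JT "rho x"]
    by (simp add: y_def v_def linear_diff[OF rho_linear] rho_A algebra_simps)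
  then have "rho y \<in> eigenspace_pm JT (-1)"
    by (simp add: proj_minus_eigenspace[OF JT_linear JT_involution])
  then have "a_star pair rho (proj_minus J) (\<lambda>w. pair y (A w)) = y"
    by (rule a_star_minus_pair_A[OF y])
  then have "x = a_star pair rho (proj_minus J) (\<lambda>w. pair y (A w)) + A v"
    by (simp add: y_def)
  moreover have "(\<lambda>w. pair y (A w)) \<in> annihilator (eigenspace_pm JT 1)"
    using pair_bilinear A_linear eigenspace_isotropic[OF y A_eigenspace]
    by (auto simp: annihilator_def bilinear_def intro: linear_compose[of A "pair y", unfolded o_def])
  ultimately show "x \<in> {s + t | s t. s \<in> a_star pair rho (proj_minus J) ` annihilator (eigenspace_pm JT 1)
     \<and> t \<in> A ` eigenspace_pm JT 1}"
    using v by blast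
next
  fix x assume "x \<in> {s + t | s t. s \<in> a_star pair rho (proj_minus J) ` annihilator (eigenspace_pm JT 1)
     \<and> t \<in> A ` eigenspace_pm JT 1}"
  then obtain \<xi> v where \<xi>: "linear \<xi>" and v: "v \<in> eigenspace_pm JT 1"
    and x: "x = a_star pair rho (proj_minus J) \<xi> + A v"
    by (auto simp: annihilator_def)
  show "x \<in> eigenspace_pm J 1"
    using a_star_minus_eigenspace[OF \<xi>] A_eigenspace[OF v]
    by (simp add: x eigenspace_pm_def linear_add[OF J_linear])
qed

lemma eigenspace_plus_direct_sum:
  "internal_direct_sum (eigenspace_pm J 1)
     (a_star pair rho (proj_minus J) ` annihilator (eigenspace_pm JT 1)) (A ` eigenspace_pm JT 1)"
  unfolding internal_direct_sum_def using a_star_minus_inter_A eigenspace_plus_eq_sum by blast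

lemma para_complex_connection_uminus: "para_complex_connection pair rho (\<lambda>e. - J e) (\<lambda>v. - JT v) A"
  by (rule para_complex_connection.intro)
    (simp_all add: pair_bilinear pair_symmetric pair_nondegenerate rho_linear ker_rho
      linear_compose_neg J_linear JT_linear A_linear rho_A A_isotropic
      linear_neg[OF J_linear] linear_neg[OF JT_linear] linear_neg[OF A_linear] J_involution JT_involution
      bilinear_lneg[OF pair_bilinear] bilinear_rneg[OF pair_bilinear] pair_J J_A)

lemma eigenspace_minus_direct_sum:
  "internal_direct_sum (eigenspace_pm J (-1))
     (a_star pair rho (proj_plus J) ` annihilator (eigenspace_pm JT (-1))) (A ` eigenspace_pm JT (-1))"
  using para_complex_connection.eigenspace_plus_direct_sum[OF para_complex_connection_uminus]
  by (simp add: eigenspace_pm_uminus proj_minus_uminus)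

end

theorem mainTheorem4:
  fixes g :: "'v::euclidean_space \<Rightarrow> 'v \<Rightarrow> real"
    and JT :: "'v \<Rightarrow> 'v"
    and pair :: "'e::euclidean_space \<Rightarrow> 'e \<Rightarrow> real"
    and J :: "'e \<Rightarrow> 'e"
    and rho :: "'e \<Rightarrow> 'v"
    and A :: "'v \<Rightarrow> 'e"
  assumes
    \<comment> \<open>para-Hermitian structure on the tangent space\<close>
    g_bil: "bilinear g" and g_sym: "symmetric_form g" and g_nd: "nondegenerate g"
    and g_split: "split_signature g"
    and JT_lin: "linear JT" and JT_inv: "\<And>v. JT (JT v) = v"
    and JT_rank: "dim (eigenspace_pm JT 1) = dim (eigenspace_pm JT (-1))"
    and g_JT: "\<And>u w. g (JT u) (JT w) = - g u w"
    \<comment> \<open>Courant algebroid fibre: pairing and anchor\<close>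
    and pair_bil: "bilinear pair" and pair_sym: "symmetric_form pair"
    and pair_nd: "nondegenerate pair"
    and rho_lin: "linear rho"
    \<comment> \<open>exactness of 0 -> T*M -> E -> TM -> 0\<close>
    and rho_surj: "surj rho"
    and rho_star_inj: "inj_on (rho_star pair rho) covectors"
    and rho_star_ker: "rho_star pair rho ` covectors = {e. rho e = 0}"
    \<comment> \<open>para-Hermitian algebroid structure\<close>
    and J_lin: "linear J" and J_inv: "\<And>e. J (J e) = e"
    and J_rank: "dim (eigenspace_pm J 1) = dim (eigenspace_pm J (-1))"
    and pair_J: "\<And>a b. pair (J a) (J b) = - pair a b"
    \<comment> \<open>para-complex connection\<close>
    and A_lin: "linear A" and A_split: "\<And>v. rho (A v) = v"
    and A_iso: "\<And>u w. pair (A u) (A w) = 0"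
    and A_pc: "\<And>v. J (A v) = A (JT v)"
  shows
    "internal_direct_sum (eigenspace_pm J 1)
        (a_star pair rho (proj_minus J) ` annihilator (eigenspace_pm JT 1))
        (A ` eigenspace_pm JT 1)
     \<and> internal_direct_sum (eigenspace_pm J (-1))
        (a_star pair rho (proj_plus J) ` annihilator (eigenspace_pm JT (-1)))
        (A ` eigenspace_pm JT (-1))"
proof -
  interpret para_complex_connection pair rho J JT A
    using pair_bil pair_sym pair_nd rho_lin rho_star_ker J_lin J_inv pair_J JT_lin JT_inv
      A_lin A_split A_iso A_pc
    by (simp add: para_complex_connection_def)
  show ?thesis
    using eigenspace_plus_direct_sum eigenspace_minus_direct_sum by blast
qed

end
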